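(* Let $M$ be a monoid that satisfies, for every $n\ge1$, the identity $$xy_1^2y_2^2\cdots y_{n-1}^2y_n^2x\approx xy_1^2y_2^2\cdots y_{n-1}^2y_nxy_n.$$ If the $\lambda$-class $bta^+b^+$ is a $\lambda$-term for $M$, then $M$ is non-finitely based (the monoid variety generated by $M$ has no finite identity basis).
   Context: Words are elements of the free monoid $\mathfrak A^*$ over a countably infinite alphabet. Let $\tau_1$ be the congruence on $\mathfrak A^*$ generated by $a=aa$ for all letters $a$. Define $\mathbf u\,\lambda\,\mathbf v$ iff $\mathbf u\,\tau_1\,\mathbf v$, $\mathbf u,\mathbf v$ have the same set of letters occurring at least twice, and for each such letter its first two occurrences are adjacent in $\mathbf u$ iff they are adjacent in $\mathbf v$. The notation $bta^+b^+$ denotes the $\lambda$-class $\{bta^kb^m:k\ge2,m\ge1\}$. A $\lambda$-class $\mathtt u$ is a $\lambda$-term for $M$ if for every word $\mathbf u\in\mathtt u$ and every word $\mathbf v$ such that $M$ satisfies $\mathbf u\approx\mathbf v$, we have $\mathbf u\,\lambda\,\mathbf v$. *)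

theory Defs
  imports Main
begin

type_synonym word = "nat list"

definition word_eval :: "(nat \<Rightarrow> 'm::monoid_mult) \<Rightarrow> word \<Rightarrow> 'm" where
  "word_eval \<phi> w = prod_list (map \<phi> w)"

definition satisfies :: "'m::monoid_mult itself \<Rightarrow> word \<Rightarrow> word \<Rightarrow> bool" where
  "satisfies M u v \<longleftrightarrow> (\<forall>\<phi> :: nat \<Rightarrow> 'm. word_eval \<phi> u = word_eval \<phi> v)"

definition wsubst :: "(nat \<Rightarrow> word) \<Rightarrow> word \<Rightarrow> word" where
  "wsubst \<sigma> w = concat (map \<sigma> w)"

inductive derivable :: "(word \<times> word) set \<Rightarrow> word \<Rightarrow> word \<Rightarrow> bool" for \<Sigma> where
  ax: "(u, v) \<in> \<Sigma> \<Longrightarrow> derivable \<Sigma> u v"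
| refl: "derivable \<Sigma> u u"
| sym: "derivable \<Sigma> u v \<Longrightarrow> derivable \<Sigma> v u"
| trans: "derivable \<Sigma> u v \<Longrightarrow> derivable \<Sigma> v w \<Longrightarrow> derivable \<Sigma> u w"
| ctxt: "derivable \<Sigma> u v \<Longrightarrow> derivable \<Sigma> (p @ u @ q) (p @ v @ q)"
| subst: "derivable \<Sigma> u v \<Longrightarrow> derivable \<Sigma> (wsubst \<sigma> u) (wsubst \<sigma> v)"

definition finitely_based :: "'m::monoid_mult itself \<Rightarrow> bool" where
  "finitely_based M \<longleftrightarrow>
     (\<exists>\<Sigma>. finite \<Sigma> \<and> (\<forall>u v. satisfies M u v \<longleftrightarrow> derivable \<Sigma> u v))"

inductive tau1 :: "word \<Rightarrow> word \<Rightarrow> bool" where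
  gen: "tau1 (p @ [a] @ q) (p @ [a, a] @ q)"
| refl: "tau1 u u"
| sym: "tau1 u v \<Longrightarrow> tau1 v u"
| trans: "tau1 u v \<Longrightarrow> tau1 v w \<Longrightarrow> tau1 u w"

definition mult_letters :: "word \<Rightarrow> nat set" where
  "mult_letters w = {a. count_list w a \<ge> 2}"

definition first_two_adjacent :: "word \<Rightarrow> nat \<Rightarrow> bool" where
  "first_two_adjacent w a \<longleftrightarrow> (\<exists>p q. w = p @ [a, a] @ q \<and> a \<notin> set p)"

definition lambda_rel :: "word \<Rightarrow> word \<Rightarrow> bool" where
  "lambda_rel u v \<longleftrightarrow> tau1 u v \<and> mult_letters u = mult_letters v \<and>
     (\<forall>a \<in> mult_letters u. first_two_adjacent u a \<longleftrightarrow> first_two_adjacent v a)"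

definition is_lambda_term :: "'m::monoid_mult itself \<Rightarrow> word set \<Rightarrow> bool" where
  "is_lambda_term M U \<longleftrightarrow> (\<forall>u \<in> U. \<forall>v. satisfies M u v \<longrightarrow> lambda_rel u v)"

definition bta_class :: "nat \<Rightarrow> nat \<Rightarrow> nat \<Rightarrow> word set" where
  "bta_class b t a = {[b, t] @ replicate k a @ replicate m b | k m. k \<ge> 2 \<and> m \<ge> 1}"

text \<open>The identity x y1^2 ... y_{n-1}^2 y_n^2 x = x y1^2 ... y_{n-1}^2 y_n x y_n,
  with x = letter 0 and y_i = letter i.\<close>
definition sq_prefix :: "nat \<Rightarrow> word" where
  "sq_prefix n = [0] @ concat (map (\<lambda>i. [i, i]) [1..<n])"

end

theory Submission
  imports Defs
begin

(* Suppose M had a finite basis and let n exceed by 3 the number of distinct letters of each of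
  its identities. Call a word good if its positive letters occur in nondecreasing order, each of
  1, ..., n-1 occurs after some 0, and erasing all letters but 0 and n and renaming 0 to b and
  n to a leaves b a^k b^m with k >= 2, m >= 1. The left side x y1^2 ... yn^2 x of the n-th
  identity is good; the right side is not, as it leaves b a b a.

  Since bta^+b^+ is a lambda-term, an identity l = r of M maps every substitution instance of l
  lying in bta^+b^+ to one of r lying there too. Well-chosen substitutions show that r has the
  letters of l, the repeated letters of l, and every occurrence of x before y found in l; this
  keeps the first two conditions. For the third, take a letter of l occurring once whose image
  contains the cut between the leading b and the a's, insert t at the cut, and apply the
  lambda-term property once more. Such a letter exists: otherwise 1, ..., n-1 would have to lie
  in images of distinct repeated letters of l (a repeated letter carries at most one positive
  letter, or the order breaks), which needs more letters than l has. So all consequences of the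
  basis preserve goodness, and the n-th identity is not one of them. *)

section \<open>Substitutions and derivations\<close>

lemma word_eval_append [simp]: "word_eval \<phi> (u @ v) = word_eval \<phi> u * word_eval \<phi> v"
  by (simp add: word_eval_def)

lemma wsubst_Nil [simp]: "wsubst \<sigma> [] = []"
  and wsubst_Cons [simp]: "wsubst \<sigma> (c # w) = \<sigma> c @ wsubst \<sigma> w"
  and wsubst_append [simp]: "wsubst \<sigma> (u @ v) = wsubst \<sigma> u @ wsubst \<sigma> v"
  by (simp_all add: wsubst_def)

lemma wsubst_wsubst: "wsubst \<sigma> (wsubst \<tau> w) = wsubst (\<lambda>c. wsubst \<sigma> (\<tau> c)) w"
  by (induction w) simp_all

lemma wsubst_cong: "(\<And>c. c \<in> set w \<Longrightarrow> \<sigma> c = \<tau> c) \<Longrightarrow> wsubst \<sigma> w = wsubst \<tau> w"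
  by (induction w) simp_all

lemma wsubst_letters [simp]: "wsubst (\<lambda>c. [c]) w = w"
  by (induction w) simp_all

lemma wsubst_eq_Nil_iff: "wsubst \<sigma> w = [] \<longleftrightarrow> (\<forall>c\<in>set w. \<sigma> c = [])"
  by (induction w) simp_all

lemma set_wsubst: "set (wsubst \<sigma> w) = (\<Union>c\<in>set w. set (\<sigma> c))"
  by (induction w) auto

lemma filter_wsubst: "filter P (wsubst \<sigma> w) = wsubst (\<lambda>c. filter P (\<sigma> c)) w"
  by (induction w) simp_all

lemma count_list_replicate [simp]: "count_list (replicate n x) y = (if x = y then n else 0)"
  by (induction n) auto

lemma wsubst_single_letter:
  "wsubst (\<lambda>c. if c = e then [x] else []) w = replicate (count_list w e) x"
  by (induction w) auto

lemma wsubst_split_first: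
  assumes "x \<in> set (wsubst \<sigma> w)"
  obtains w0 c w1 \<alpha> \<beta> where "w = w0 @ c # w1" "\<sigma> c = \<alpha> @ x # \<beta>" "x \<notin> set (wsubst \<sigma> w0 @ \<alpha>)"
proof -
  have "\<exists>c\<in>set w. x \<in> set (\<sigma> c)"
    using assms by (simp add: set_wsubst)
  then obtain w0 c w1 where w: "w = w0 @ c # w1" and "x \<in> set (\<sigma> c)"
    and first: "\<forall>c'\<in>set w0. x \<notin> set (\<sigma> c')"
    by (rule split_list_first_propE)
  from \<open>x \<in> set (\<sigma> c)\<close> obtain \<alpha> \<beta> where "\<sigma> c = \<alpha> @ x # \<beta>" "x \<notin> set \<alpha>"
    by (blast dest: split_list_first)
  with w first show ?thesis
    by (intro that) (auto simp: set_wsubst)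
qed

lemma word_eval_wsubst: "word_eval \<phi> (wsubst \<sigma> w) = word_eval (\<lambda>c. word_eval \<phi> (\<sigma> c)) w"
  by (induction w) (simp_all add: word_eval_def)

lemma satisfies_sym: "satisfies M u v \<Longrightarrow> satisfies M v u"
  by (simp add: satisfies_def)

lemma satisfies_ctxt_subst:
  "satisfies M u v \<Longrightarrow> satisfies M (p @ wsubst \<sigma> u @ q) (p @ wsubst \<sigma> v @ q)"
  by (simp add: satisfies_def word_eval_wsubst)

lemma finite_identities_card_bound:
  fixes \<Sigma> :: "('a list \<times> 'a list) set"
  assumes "finite \<Sigma>"
  obtains N where "\<And>l r. (l, r) \<in> \<Sigma> \<Longrightarrow> card (set l) \<le> N \<and> card (set r) \<le> N"
proof
  let ?V = "\<Union>(l, r)\<in>\<Sigma>. set l \<union> set r"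
  have "finite ?V"
    using assms by auto
  fix l r
  assume "(l, r) \<in> \<Sigma>"
  then have "set l \<subseteq> ?V" "set r \<subseteq> ?V"
    by blast+
  with \<open>finite ?V\<close> show "card (set l) \<le> card ?V \<and> card (set r) \<le> card ?V"
    by (simp add: card_mono)
qed

lemma derivable_invariant:
  assumes "derivable \<Sigma> u v"
    and step: "\<And>l r p \<sigma> q. (l, r) \<in> \<Sigma> \<or> (r, l) \<in> \<Sigma> \<Longrightarrow>
      P (p @ wsubst \<sigma> l @ q) \<Longrightarrow> P (p @ wsubst \<sigma> r @ q)"
  shows "P u \<longleftrightarrow> P v"
proof -
  have "P (p @ wsubst \<sigma> u @ q) \<longleftrightarrow> P (p @ wsubst \<sigma> v @ q)" for p \<sigma> q
    using assms(1)
  proof (induction arbitrary: p \<sigma> q)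
    case (ax u v)
    then show ?case by (blast intro: step)
  next
    case (ctxt u v p' q')
    then show ?case by (metis append.assoc wsubst_append)
  next
    case (subst u v \<tau>)
    then show ?case by (simp add: wsubst_wsubst)
  qed simp_all
  from this[of "[]" "\<lambda>c. [c]" "[]"] show ?thesis by simp
qed

lemma context_as_substitution:
  assumes "finite V"
  obtains x y \<sigma>' where "\<And>w. set w \<subseteq> V \<Longrightarrow> wsubst \<sigma>' ([x] @ w @ [y]) = p @ wsubst \<sigma> w @ q"
proof
  define x where "x = Suc (Max (insert 0 V))"
  have fresh: "c < x" if "c \<in> V" for c
    using assms that by (simp add: x_def le_imp_less_Suc)
  show "wsubst (\<sigma>(x := p, Suc x := q)) ([x] @ w @ [Suc x]) = p @ wsubst \<sigma> w @ q"
    if "set w \<subseteq> V" for w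
  proof -
    have "wsubst (\<sigma>(x := p, Suc x := q)) w = wsubst \<sigma> w"
      using that fresh by (intro wsubst_cong) fastforce
    then show ?thesis
      by simp
  qed
qed

section \<open>Relative order of occurrences\<close>

definition occurs_before :: "('a \<Rightarrow> bool) \<Rightarrow> ('a \<Rightarrow> bool) \<Rightarrow> 'a list \<Rightarrow> bool" where
  "occurs_before P Q w \<longleftrightarrow> (\<exists>u x v y z. w = u @ x # v @ y # z \<and> P x \<and> Q y)"

abbreviation before :: "'a \<Rightarrow> 'a \<Rightarrow> 'a list \<Rightarrow> bool" where
  "before x y w \<equiv> occurs_before (\<lambda>c. c = x) (\<lambda>c. c = y) w"

lemma beforeI: "w = u @ x # v @ y # z \<Longrightarrow> before x y w"
  unfolding occurs_before_def by blast

lemma occurs_before_iff_before: "occurs_before P Q w \<longleftrightarrow> (\<exists>x y. P x \<and> Q y \<and> before x y w)"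
  unfolding occurs_before_def by blast

lemma occurs_before_Nil [simp]: "\<not> occurs_before P Q []"
  by (simp add: occurs_before_def)

lemma occurs_before_Cons:
  "occurs_before P Q (c # w) \<longleftrightarrow> (P c \<and> (\<exists>y\<in>set w. Q y)) \<or> occurs_before P Q w"
proof
  assume "occurs_before P Q (c # w)"
  then obtain u x v y z where w: "c # w = u @ x # v @ y # z" and "P x" "Q y"
    unfolding occurs_before_def by blast
  then show "(P c \<and> (\<exists>y\<in>set w. Q y)) \<or> occurs_before P Q w"
  proof (cases u)
    case (Cons c' u')
    with w have "w = u' @ x # v @ y # z"
      by simp
    with \<open>P x\<close> \<open>Q y\<close> have "occurs_before P Q w"
      unfolding occurs_before_def by blast
    then show ?thesis ..
  qed auto
next
  assume "(P c \<and> (\<exists>y\<in>set w. Q y)) \<or> occurs_before P Q w"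
  then show "occurs_before P Q (c # w)"
  proof
    assume "P c \<and> (\<exists>y\<in>set w. Q y)"
    then obtain v y z where "w = v @ y # z" "P c" "Q y"
      by (metis split_list)
    then show ?thesis
      unfolding occurs_before_def by (metis append_Nil)
  next
    assume "occurs_before P Q w"
    then show ?thesis
      unfolding occurs_before_def by (metis append_Cons)
  qed
qed

lemma occurs_before_append:
  "occurs_before P Q (u @ v) \<longleftrightarrow>
     occurs_before P Q u \<or> occurs_before P Q v \<or> ((\<exists>x\<in>set u. P x) \<and> (\<exists>y\<in>set v. Q y))"
  by (induction u) (auto simp: occurs_before_Cons)

lemma occurs_before_wsubst:
  "occurs_before P Q (wsubst \<sigma> w) \<longleftrightarrow> (\<exists>c\<in>set w. occurs_before P Q (\<sigma> c)) \<or>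
     occurs_before (\<lambda>c. \<exists>x\<in>set (\<sigma> c). P x) (\<lambda>c. \<exists>y\<in>set (\<sigma> c). Q y) w"
  by (induction w) (auto simp: occurs_before_append occurs_before_Cons set_wsubst)

lemma before_setD: "before x y w \<Longrightarrow> x \<in> set w \<and> y \<in> set w"
  unfolding occurs_before_def by auto

lemma before_self_iff: "before x x w \<longleftrightarrow> 2 \<le> count_list w x"
proof
  assume "before x x w"
  then show "2 \<le> count_list w x"
    unfolding occurs_before_def by auto
next
  assume "2 \<le> count_list w x"
  then obtain n where "count_list w x = Suc (Suc n)"
    by (metis add_2_eq_Suc le_Suc_ex)
  then obtain u v z where "w = u @ x # v @ x # z"
    by (metis count_list_Suc_split_first)
  then show "before x x w"
    by (rule beforeI)
qed

lemma before_first_occurrence: "before x y (u @ x # v) \<Longrightarrow> x \<notin> set u \<Longrightarrow> y \<in> set v"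
  by (auto simp: occurs_before_append occurs_before_Cons dest: before_setD)

lemma not_before_split:
  assumes "x \<noteq> y" and "\<not> before x y w"
  obtains u v where "w = u @ v" "x \<notin> set u" "y \<notin> set v"
proof (cases "x \<in> set w")
  case True
  then obtain u v where w: "w = u @ x # v" and "x \<notin> set u"
    by (metis split_list_first)
  moreover have "y \<notin> set v"
    using assms(2) w by (metis beforeI split_list)
  ultimately show ?thesis
    using assms(1) that by auto
next
  case False
  then show ?thesis
    using that[of w "[]"] by simp
qed

lemma wsubst_pair_if_not_before:
  assumes "x \<noteq> y" and "\<not> before x y w"
  shows "wsubst (\<lambda>c. if c = y then [p] else if c = x then [q] else []) w
    = replicate (count_list w y) p @ replicate (count_list w x) q"
proof -
  obtain u v where w: "w = u @ v" and "x \<notin> set u" "y \<notin> set v"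
    using assms by (rule not_before_split)
  then have "wsubst (\<lambda>c. if c = y then [p] else if c = x then [q] else []) u
      = wsubst (\<lambda>c. if c = y then [p] else []) u"
    and "wsubst (\<lambda>c. if c = y then [p] else if c = x then [q] else []) v
      = wsubst (\<lambda>c. if c = x then [q] else []) v"
    using \<open>x \<noteq> y\<close> by (auto intro!: wsubst_cong)
  with w \<open>x \<notin> set u\<close> \<open>y \<notin> set v\<close> show ?thesis
    by (simp add: wsubst_single_letter)
qed

lemma not_before_replicate:
  "x \<noteq> y \<Longrightarrow> \<not> before y x (replicate k x @ replicate m y)"
  by (auto simp: occurs_before_append dest: before_setD)

lemma replicate_append_eq_repeat_Nil:
  assumes "x \<noteq> y" "0 < k" and eq: "replicate k x @ replicate m y = w @ u @ y # w @ v"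
  shows "w = []"
proof (cases w)
  case (Cons c w')
  from \<open>0 < k\<close> eq have "c = x"
    by (cases k) (simp_all add: Cons)
  with eq have "before y x (replicate k x @ replicate m y)"
    by (intro beforeI[of _ "w @ u" _ "[]" _ "w' @ v"]) (simp add: Cons)
  with not_before_replicate[OF \<open>x \<noteq> y\<close>] show ?thesis
    by blast
qed

section \<open>Words with sorted positive letters\<close>

definition sorted_positives :: "word \<Rightarrow> bool" where
  "sorted_positives w \<longleftrightarrow> (\<forall>i j. 0 < i \<longrightarrow> i < j \<longrightarrow> \<not> before j i w)"

definition zero_precedes :: "nat \<Rightarrow> word \<Rightarrow> bool" where
  "zero_precedes n w \<longleftrightarrow> (\<forall>i. 0 < i \<longrightarrow> i < n \<longrightarrow> before 0 i w)"

lemma zero_precedes_after_first_zero: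
  assumes "zero_precedes n w" and "w = u @ 0 # v" and "0 \<notin> set u"
  shows "{1..<n} \<subseteq> set v"
proof
  fix i
  assume "i \<in> {1..<n}"
  with assms(1,2) have "before 0 i (u @ 0 # v)"
    unfolding zero_precedes_def by simp
  then show "i \<in> set v"
    using assms(3) by (rule before_first_occurrence)
qed

lemma sorted_positives_if_sorted_filter:
  assumes "sorted (filter (\<lambda>x. 0 < x) w)"
  shows "sorted_positives w"
  unfolding sorted_positives_def
proof (intro allI impI notI)
  fix i j :: nat
  assume "0 < i" "i < j" "before j i w"
  then obtain u v z where "w = u @ j # v @ i # z"
    unfolding occurs_before_def by blast
  with assms \<open>0 < i\<close> \<open>i < j\<close> show False
    by (simp add: sorted_append)
qed

lemma sorted_concat_map_double: "sorted xs \<Longrightarrow> sorted (concat (map (\<lambda>i. [i, i]) xs))"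
  by (induction xs) auto

lemma repeated_letter_one_positive:
  assumes sorted: "sorted_positives (wsubst \<sigma> w)" and "2 \<le> count_list w c"
    and "i \<in> set (\<sigma> c)" "j \<in> set (\<sigma> c)" "0 < i" "0 < j"
  shows "i = j"
proof -
  from \<open>2 \<le> count_list w c\<close> have "before c c w"
    by (simp add: before_self_iff)
  then obtain u v z where "w = u @ c # v @ c # z"
    unfolding occurs_before_def by blast
  then have "before x y (wsubst \<sigma> w)" if "x \<in> set (\<sigma> c)" "y \<in> set (\<sigma> c)" for x y
    using that by (simp add: occurs_before_append)
  with assms show "i = j"
    unfolding sorted_positives_def by (cases i j rule: linorder_cases) auto
qed

lemma card_le_if_repeated_letters_cover:
  assumes "sorted_positives (wsubst \<sigma> w)" and "\<forall>c\<in>set u. 2 \<le> count_list w c"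
    and "{1..<n} \<subseteq> set (wsubst \<sigma> u)"
  shows "n - 1 \<le> card (set u)"
proof -
  have "card {1..<n} \<le> card (set u)"
    by (rule card_le_if_inj_on_rel[where r = "\<lambda>i c. i \<in> set (\<sigma> c)"])
      (use assms repeated_letter_one_positive in \<open>auto simp: set_wsubst\<close>)
  then show ?thesis
    by simp
qed

lemma smaller_positives_before_repeated_letter:
  assumes sorted: "sorted_positives (wsubst \<sigma> l)" and l: "l = p @ u @ d # v"
    and "2 \<le> count_list l d" "n \<in> set (\<sigma> d)"
    and cover: "{1..<n} \<subseteq> set (wsubst \<sigma> (u @ d # v))"
  shows "{1..<n} \<subseteq> set (wsubst \<sigma> u)"
proof
  fix i
  assume i: "i \<in> {1..<n}"
  have "i \<notin> set (\<sigma> d)"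
  proof
    assume "i \<in> set (\<sigma> d)"
    from repeated_letter_one_positive[OF sorted \<open>2 \<le> count_list l d\<close> this \<open>n \<in> set (\<sigma> d)\<close>] i
    show False
      by simp
  qed
  moreover have "i \<notin> set (wsubst \<sigma> v)"
  proof
    assume "i \<in> set (wsubst \<sigma> v)"
    with \<open>n \<in> set (\<sigma> d)\<close> have "before n i (wsubst \<sigma> (p @ u) @ \<sigma> d @ wsubst \<sigma> v)"
      by (simp add: occurs_before_append)
    with sorted i show False
      unfolding sorted_positives_def l by simp
  qed
  ultimately show "i \<in> set (wsubst \<sigma> u)"
    using cover i by auto
qed

lemma card_letters_ge_if_not_single:
  assumes sorted: "sorted_positives (wsubst \<sigma> l)" and l: "l = p @ u @ d # v"
    and not_single: "\<forall>e\<in>set (d # u). count_list l e \<noteq> 1" and "d \<notin> set u"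
    and "n \<in> set (\<sigma> d)" and cover: "{1..<n} \<subseteq> set (wsubst \<sigma> (u @ d # v))"
  shows "n \<le> card (set l)"
proof -
  have "\<forall>e\<in>set (d # u). 2 \<le> count_list l e"
  proof
    fix e
    assume "e \<in> set (d # u)"
    with l not_single have "count_list l e \<noteq> 0" "count_list l e \<noteq> 1"
      by (auto simp: count_list_0_iff)
    then show "2 \<le> count_list l e"
      by linarith
  qed
  then have "{1..<n} \<subseteq> set (wsubst \<sigma> u)"
    using smaller_positives_before_repeated_letter[OF sorted l] \<open>n \<in> set (\<sigma> d)\<close> cover by simp
  then have "n - 1 \<le> card (set u)"
    using card_le_if_repeated_letters_cover[OF sorted] \<open>\<forall>e\<in>set (d # u). 2 \<le> count_list l e\<close>
    by simp
  moreover have "set u \<subset> set l"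
    using l \<open>d \<notin> set u\<close> by auto
  then have "card (set u) < card (set l)"
    by (simp add: psubset_card_mono)
  ultimately show ?thesis
    by linarith
qed

section \<open>The lambda-class bta^+b^+\<close>

lemma tau1_remdups_adj: "tau1 u v \<Longrightarrow> remdups_adj u = remdups_adj v"
proof (induction rule: tau1.induct)
  case (gen p x q)
  have "remdups_adj (p @ x # q) = remdups_adj (p @ [x]) @ tl (remdups_adj (x # q))"
    and "remdups_adj (p @ x # x # q) = remdups_adj (p @ [x]) @ tl (remdups_adj (x # x # q))"
    by (rule remdups_adj_append)+
  then show ?case
    by simp
qed simp_all

lemma remdups_adj_eq_ConsE:
  assumes "remdups_adj w = x # xs"
  obtains i w' where "1 \<le> i" "w = replicate i x @ w'" "remdups_adj w' = xs"
proof -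
  obtain w'' where w: "w = x # w''"
    using assms by (cases w) (auto simp: remdups_adj_Cons')
  let ?p = "takeWhile (\<lambda>z. z = x) w''" and ?s = "dropWhile (\<lambda>z. z = x) w''"
  have "?p = replicate (length ?p) x"
    by (metis (mono_tags, lifting) replicate_length_same set_takeWhileD)
  then have "w = replicate (Suc (length ?p)) x @ ?s"
    using w by (metis append_Cons replicate_Suc takeWhile_dropWhile_id)
  moreover have "remdups_adj ?s = xs"
    using assms unfolding w remdups_adj_Cons' by simp
  ultimately show ?thesis
    by (intro that[of "Suc (length ?p)"]) simp_all
qed

lemma first_two_adjacent_Cons_Cons:
  "first_two_adjacent (x # y # w) x \<longleftrightarrow> y = x"
proof
  assume "first_two_adjacent (x # y # w) x"
  then obtain p q where "x # y # w = p @ [x, x] @ q" "x \<notin> set p"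
    unfolding first_two_adjacent_def by blast
  then show "y = x"
    by (cases p) auto
next
  assume "y = x"
  then show "first_two_adjacent (x # y # w) x"
    unfolding first_two_adjacent_def by (intro exI[of _ "[]"] exI[of _ w]) simp
qed

lemma bta_classI: "2 \<le> k \<Longrightarrow> 1 \<le> m \<Longrightarrow> [b, t] @ replicate k a @ replicate m b \<in> bta_class b t a"
  unfolding bta_class_def by blast

lemma tau1_bta_classE:
  assumes abt: "distinct [a, b, t]" and "u \<in> bta_class b t a" and "tau1 u v"
  obtains i j k m where "1 \<le> i" "1 \<le> j" "1 \<le> k" "1 \<le> m"
    "v = replicate i b @ replicate j t @ replicate k a @ replicate m b"
proof -
  obtain k m where "2 \<le> k" "1 \<le> m" and u: "u = b # t # replicate k a @ replicate m b"
    using \<open>u \<in> bta_class b t a\<close> unfolding bta_class_def by auto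
  have "remdups_adj (replicate k a @ replicate m b) = [a, b]"
    using abt \<open>2 \<le> k\<close> \<open>1 \<le> m\<close>
    by (subst remdups_adj_append') (auto simp: remdups_adj_replicate)
  with \<open>tau1 u v\<close> abt have "remdups_adj v = [b, t, a, b]"
    unfolding u by (simp add: remdups_adj_Cons flip: tau1_remdups_adj)
  with that show ?thesis
    by (elim remdups_adj_eq_ConsE) auto
qed

lemma bta_class_lambda_closed:
  assumes abt: "distinct [a, b, t]" and u: "u \<in> bta_class b t a" and "lambda_rel u v"
  shows "v \<in> bta_class b t a"
proof -
  obtain k m where "2 \<le> k" "1 \<le> m" and u_eq: "u = b # t # replicate k a @ replicate m b"
    using u unfolding bta_class_def by auto
  from \<open>lambda_rel u v\<close> have mult: "mult_letters v = mult_letters u"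
    and adj: "\<And>c. c \<in> mult_letters u \<Longrightarrow> first_two_adjacent v c \<longleftrightarrow> first_two_adjacent u c"
    and "tau1 u v"
    unfolding lambda_rel_def by auto
  with abt u obtain i j k' m' where "1 \<le> i" "1 \<le> j" "1 \<le> k'" "1 \<le> m'"
    and v_eq: "v = replicate i b @ replicate j t @ replicate k' a @ replicate m' b"
    by (elim tau1_bta_classE)
  have counts: "count_list u t = 1" "count_list u a = k" "count_list u b = Suc m"
    "count_list v t = j" "count_list v a = k'" "count_list v b = i + m'"
    using abt unfolding u_eq v_eq by auto
  have "t \<notin> mult_letters v" "a \<in> mult_letters v"
    using \<open>2 \<le> k\<close> unfolding mult by (simp_all add: mult_letters_def counts)
  then have "j = 1" and "2 \<le> k'"
    using \<open>1 \<le> j\<close> by (simp_all add: mult_letters_def counts)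
  have "b \<in> mult_letters u"
    using \<open>1 \<le> m\<close> by (simp add: mult_letters_def counts)
  moreover have "\<not> first_two_adjacent u b"
    using abt unfolding u_eq by (simp add: first_two_adjacent_Cons_Cons)
  ultimately have "\<not> first_two_adjacent v b"
    using adj by blast
  moreover obtain i' where "i = Suc i'"
    using \<open>1 \<le> i\<close> by (cases i) auto
  then have "first_two_adjacent v b \<longleftrightarrow> i' \<noteq> 0"
    using abt \<open>j = 1\<close> unfolding v_eq by (cases i') (auto simp: first_two_adjacent_Cons_Cons)
  ultimately have "i = 1"
    using \<open>i = Suc i'\<close> by simp
  with \<open>j = 1\<close> have "v = [b, t] @ replicate k' a @ replicate m' b"
    unfolding v_eq by simp
  then show ?thesis
    using bta_classI[OF \<open>2 \<le> k'\<close> \<open>1 \<le> m'\<close>] by simp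
qed

section \<open>Identities of a monoid for which bta^+b^+ is a lambda-term\<close>

locale bta_lambda_term =
  fixes M :: "'m::monoid_mult itself" and a b t :: nat
  assumes abt_distinct: "distinct [a, b, t]"
    and lambda_term: "is_lambda_term M (bta_class b t a)"
begin

lemma letters_distinct: "a \<noteq> b" "a \<noteq> t" "b \<noteq> t"
  using abt_distinct by auto

lemma identity_preserves_bta_class:
  assumes "satisfies M l r" and "p @ wsubst \<sigma> l @ q \<in> bta_class b t a"
  shows "p @ wsubst \<sigma> r @ q \<in> bta_class b t a"
proof -
  have "satisfies M (p @ wsubst \<sigma> l @ q) (p @ wsubst \<sigma> r @ q)"
    using assms(1) by (rule satisfies_ctxt_subst)
  with assms(2) lambda_term have "lambda_rel (p @ wsubst \<sigma> l @ q) (p @ wsubst \<sigma> r @ q)"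
    unfolding is_lambda_term_def by blast
  with abt_distinct assms(2) show ?thesis
    by (rule bta_class_lambda_closed)
qed

lemma bt_replicate_a_b_in_bta_class_iff: "[b, t] @ replicate k a @ [b] \<in> bta_class b t a \<longleftrightarrow> 2 \<le> k"
proof
  assume "[b, t] @ replicate k a @ [b] \<in> bta_class b t a"
  then obtain k' m where "2 \<le> k'" "replicate k a @ [b] = replicate k' a @ replicate m b"
    unfolding bta_class_def by auto
  then have "count_list (replicate k a @ [b]) a = count_list (replicate k' a @ replicate m b) a"
    by simp
  with \<open>2 \<le> k'\<close> show "2 \<le> k"
    using letters_distinct by simp
next
  assume "2 \<le> k"
  then show "[b, t] @ replicate k a @ [b] \<in> bta_class b t a"
    using bta_classI[of k 1] by simp
qed

lemma count_transfer:
  assumes "satisfies M l r" and "2 \<le> count_list l c + j"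
  shows "2 \<le> count_list r c + j"
proof -
  let ?\<theta> = "\<lambda>x. if x = c then [a] else []"
  \<comment> \<open>after this substitution the lambda-class detects whether c occurs at least 2 - j times\<close>
  have eq: "[b, t] @ wsubst ?\<theta> w @ replicate j a @ [b] = [b, t] @ replicate (count_list w c + j) a @ [b]"
    for w
    by (simp add: wsubst_single_letter replicate_add)
  from assms(2) have "[b, t] @ wsubst ?\<theta> l @ replicate j a @ [b] \<in> bta_class b t a"
    unfolding eq bt_replicate_a_b_in_bta_class_iff .
  then have "[b, t] @ wsubst ?\<theta> r @ replicate j a @ [b] \<in> bta_class b t a"
    by (rule identity_preserves_bta_class[OF assms(1)])
  then show ?thesis
    unfolding eq bt_replicate_a_b_in_bta_class_iff .
qed

lemma set_transfer:
  assumes "satisfies M l r"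
  shows "set l \<subseteq> set r"
proof
  fix c
  assume "c \<in> set l"
  then have "2 \<le> count_list l c + 1"
    using count_list_0_iff[of l c] by simp
  then have "2 \<le> count_list r c + 1"
    by (rule count_transfer[OF assms])
  then show "c \<in> set r"
    using count_list_0_iff[of r c] by simp
qed

lemma before_transfer:
  assumes "satisfies M l r" and "before x y l"
  shows "before x y r"
proof (cases "x = y")
  case True
  with assms show ?thesis
    using count_transfer[of l r x 0] by (simp add: before_self_iff)
next
  case False
  show ?thesis
  proof (rule ccontr)
    assume "\<not> before x y r"
    define \<theta> where "\<theta> c = (if c = y then [a] else if c = x then [b] else [])" for c
    \<comment> \<open>it sends r into a*b*, but l to a word with some b before an a\<close>
    from False \<open>\<not> before x y r\<close> have "wsubst \<theta> r = replicate (count_list r y) a @ replicate (count_list r x) b"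
      unfolding \<theta>_def by (rule wsubst_pair_if_not_before)
    then have "[b, t, a, a] @ wsubst \<theta> r @ [b]
        = [b, t] @ replicate (Suc (Suc (count_list r y))) a @ replicate (Suc (count_list r x)) b"
      by (simp add: replicate_append_same)
    then have "[b, t, a, a] @ wsubst \<theta> r @ [b] \<in> bta_class b t a"
      by (simp only: bta_classI)
    then have "[b, t, a, a] @ wsubst \<theta> l @ [b] \<in> bta_class b t a"
      by (rule identity_preserves_bta_class[OF satisfies_sym[OF assms(1)]])
    then obtain k m where km: "[a, a] @ wsubst \<theta> l @ [b] = replicate k a @ replicate m b"
      unfolding bta_class_def by auto
    obtain u' v' z' where "l = u' @ x # v' @ y # z'"
      using assms(2) unfolding occurs_before_def by blast
    then have "[a, a] @ wsubst \<theta> l @ [b]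
        = ([a, a] @ wsubst \<theta> u') @ b # wsubst \<theta> v' @ a # wsubst \<theta> z' @ [b]"
      using False by (simp add: \<theta>_def)
    then have "before b a ([a, a] @ wsubst \<theta> l @ [b])"
      by (rule beforeI)
    then have "before b a (replicate k a @ replicate m b)"
      by (simp only: km)
    with not_before_replicate[OF letters_distinct(1)] show False
      by blast
  qed
qed

lemma occurs_before_transfer:
  assumes "satisfies M l r" and "occurs_before P Q (wsubst \<sigma> l)"
  shows "occurs_before P Q (wsubst \<sigma> r)"
proof -
  let ?P = "\<lambda>c. \<exists>x\<in>set (\<sigma> c). P x" and ?Q = "\<lambda>c. \<exists>y\<in>set (\<sigma> c). Q y"
  have "occurs_before ?P ?Q l \<Longrightarrow> occurs_before ?P ?Q r"
    unfolding occurs_before_iff_before[of ?P] using before_transfer[OF assms(1)] by blast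
  with assms(2) set_transfer[OF assms(1)] show ?thesis
    unfolding occurs_before_wsubst by blast
qed

definition proj_letter :: "nat \<Rightarrow> nat \<Rightarrow> word" where
  "proj_letter n c = (if c = 0 then [b] else if c = n then [a] else [])"

abbreviation proj :: "nat \<Rightarrow> word \<Rightarrow> word" where
  "proj n w \<equiv> wsubst (proj_letter n) w"

definition proj_shape :: "nat \<Rightarrow> word \<Rightarrow> bool" where
  "proj_shape n w \<longleftrightarrow> (\<exists>k m. 2 \<le> k \<and> 1 \<le> m \<and> proj n w = b # replicate k a @ replicate m b)"

definition good :: "nat \<Rightarrow> word \<Rightarrow> bool" where
  "good n w \<longleftrightarrow> sorted_positives w \<and> zero_precedes n w \<and> proj_shape n w"

lemma proj_letter_0 [simp]: "proj_letter n 0 = [b]"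
  by (simp add: proj_letter_def)

lemma t_notin_proj: "t \<notin> set (proj n w)"
  using letters_distinct by (induction w) (auto simp: proj_letter_def)

lemma filter_proj [simp]: "filter (\<lambda>c. c \<noteq> t) (proj n w) = proj n w"
  using t_notin_proj[of n w] by (auto simp: filter_id_conv)

lemma b_in_proj_iff: "0 < n \<Longrightarrow> b \<in> set (proj n w) \<longleftrightarrow> 0 \<in> set w"
  using letters_distinct by (induction w) (auto simp: proj_letter_def)

lemma a_in_proj_iff: "0 < n \<Longrightarrow> a \<in> set (proj n w) \<longleftrightarrow> n \<in> set w"
  using letters_distinct by (induction w) (auto simp: proj_letter_def)

lemma proj_squares: "proj n (concat (map (\<lambda>i. [i, i]) [1..<n])) = []"
  by (auto simp: wsubst_eq_Nil_iff proj_letter_def)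

lemma letter_n_in_if_proj_starts_with_a:
  assumes "0 < n" "0 < k" and "proj n w \<noteq> []"
    and "proj n w @ v = replicate k a @ replicate m b"
  shows "n \<in> set w"
proof -
  obtain k' where "k = Suc k'"
    using \<open>0 < k\<close> by (cases k) auto
  with assms(3,4) have "a \<in> set (proj n w)"
    by (cases "proj n w") auto
  then show ?thesis
    using a_in_proj_iff[OF \<open>0 < n\<close>] by blast
qed

lemma proj_shape_transfer_at_unique_letter:
  assumes s: "satisfies M l r" and shape: "proj_shape n (wsubst \<sigma> l)"
    and l: "l = u @ z # v" "z \<notin> set u" "z \<notin> set v"
    and sz: "\<sigma> z = x @ y" and prefix: "proj n (wsubst \<sigma> u @ x) = [b]"
  shows "proj_shape n (wsubst \<sigma> r)"
proof -
  obtain k m where "2 \<le> k" "1 \<le> m" and km: "proj n (wsubst \<sigma> l) = b # replicate k a @ replicate m b"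
    using shape unfolding proj_shape_def by blast
  define \<theta> where "\<theta> c = (if c = z then proj n x @ t # proj n y else proj n (\<sigma> c))" for c
  \<comment> \<open>the projection of the image, with t inserted at the cut\<close>
  have \<theta>_away: "wsubst \<theta> w = proj n (wsubst \<sigma> w)" if "z \<notin> set w" for w
    using that by (auto simp: \<theta>_def wsubst_wsubst intro!: wsubst_cong)
  have "b # proj n (y @ wsubst \<sigma> v) = proj n (wsubst \<sigma> u @ x) @ proj n (y @ wsubst \<sigma> v)"
    unfolding prefix by simp
  also have "\<dots> = proj n (wsubst \<sigma> l)"
    using l sz by simp
  finally have "proj n (y @ wsubst \<sigma> v) = replicate k a @ replicate m b"
    using km by simp
  with prefix have "wsubst \<theta> l = [b, t] @ replicate k a @ replicate m b"
    using l by (simp add: \<theta>_away \<theta>_def)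
  then have "[] @ wsubst \<theta> l @ [] \<in> bta_class b t a"
    using bta_classI[OF \<open>2 \<le> k\<close> \<open>1 \<le> m\<close>] by simp
  then have "[] @ wsubst \<theta> r @ [] \<in> bta_class b t a"
    by (rule identity_preserves_bta_class[OF s])
  then obtain k' m' where "2 \<le> k'" "1 \<le> m'"
    and r: "wsubst \<theta> r = [b, t] @ replicate k' a @ replicate m' b"
    unfolding bta_class_def by auto
  have "proj n (wsubst \<sigma> r) = filter (\<lambda>c. c \<noteq> t) (wsubst \<theta> r)"
    unfolding filter_wsubst wsubst_wsubst
    by (rule wsubst_cong) (simp add: \<theta>_def sz)
  also have "\<dots> = b # replicate k' a @ replicate m' b"
    unfolding r using letters_distinct by simp
  finally show ?thesis
    unfolding proj_shape_def using \<open>2 \<le> k'\<close> \<open>1 \<le> m'\<close> by blast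
qed

lemma proj_shape_transfer_after_prefix:
  assumes s: "satisfies M l r" and sorted: "sorted_positives (wsubst \<sigma> l)"
    and l: "l = p @ w" and p: "proj n (wsubst \<sigma> p) = [b]"
    and proj_w: "proj n (wsubst \<sigma> w) = replicate k a @ replicate m b" "2 \<le> k" "1 \<le> m"
    and cover: "{1..<n} \<subseteq> set (wsubst \<sigma> w)" and card: "card (set l) < n" and "0 < n"
  shows "proj_shape n (wsubst \<sigma> r)"
proof -
  define Q where "Q e \<longleftrightarrow> count_list l e = 1 \<or> proj n (\<sigma> e) \<noteq> []" for e
  have "wsubst (\<lambda>e. proj n (\<sigma> e)) w \<noteq> []"
    using proj_w by (simp add: wsubst_wsubst)
  then have "\<exists>e\<in>set w. Q e"
    unfolding wsubst_eq_Nil_iff Q_def by blast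
  then obtain u d v where w_split: "w = u @ d # v" and "Q d" and u: "\<forall>e\<in>set u. \<not> Q e"
    by (rule split_list_first_propE)
  have proj_u: "proj n (wsubst \<sigma> u) = []"
    using u unfolding wsubst_wsubst wsubst_eq_Nil_iff Q_def by blast
  show ?thesis
  proof (cases "count_list l d = 1")
    case True
    with l w_split have "count_list (p @ u) d = 0" "count_list v d = 0"
      by simp_all
    moreover have "proj n (wsubst \<sigma> l) = b # replicate k a @ replicate m b"
      using l p proj_w by simp
    then have "proj_shape n (wsubst \<sigma> l)"
      unfolding proj_shape_def using proj_w(2,3) by blast
    ultimately show ?thesis
      using l w_split p proj_u
      by (intro proj_shape_transfer_at_unique_letter[OF s,
            where u = "p @ u" and z = d and v = v and x = "[]" and y = "\<sigma> d"])
        (simp_all add: count_list_0_iff)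
  next
    case False
    \<comment> \<open>then d carries the first a, hence n, and every letter from d back to the cut is repeated\<close>
    have "proj n (\<sigma> d) @ proj n (wsubst \<sigma> v) = replicate k a @ replicate m b"
      using proj_w w_split proj_u by simp
    moreover have "proj n (\<sigma> d) \<noteq> []"
      using \<open>Q d\<close> False by (simp add: Q_def)
    ultimately have "n \<in> set (\<sigma> d)"
      using \<open>0 < n\<close> \<open>2 \<le> k\<close> by (intro letter_n_in_if_proj_starts_with_a) simp_all
    moreover have "\<forall>e\<in>set (d # u). count_list l e \<noteq> 1" "d \<notin> set u"
      using False u \<open>Q d\<close> by (auto simp: Q_def)
    moreover have "l = p @ u @ d # v" "{1..<n} \<subseteq> set (wsubst \<sigma> (u @ d # v))"
      using l w_split cover by simp_all
    ultimately have "n \<le> card (set l)"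
      using card_letters_ge_if_not_single[OF sorted] by blast
    with card show ?thesis
      by simp
  qed
qed

lemma proj_split_at_first_zero:
  assumes "0 < n" and km: "proj n (wsubst \<sigma> l) = b # replicate k a @ replicate m b"
  obtains l0 c l1 \<alpha> \<beta> where "l = l0 @ c # l1" "\<sigma> c = \<alpha> @ 0 # \<beta>"
    "0 \<notin> set (wsubst \<sigma> l0 @ \<alpha>)" "proj n (wsubst \<sigma> l0 @ \<alpha>) = []"
    "proj n (\<beta> @ wsubst \<sigma> l1) = replicate k a @ replicate m b"
proof -
  have "b \<in> set (proj n (wsubst \<sigma> l))"
    using km by simp
  then have "0 \<in> set (wsubst \<sigma> l)"
    using b_in_proj_iff[OF \<open>0 < n\<close>] by blast
  then obtain l0 c l1 \<alpha> \<beta> where l: "l = l0 @ c # l1" and \<sigma>c: "\<sigma> c = \<alpha> @ 0 # \<beta>"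
    and first: "0 \<notin> set (wsubst \<sigma> l0 @ \<alpha>)"
    by (rule wsubst_split_first)
  have "b \<notin> set (proj n (wsubst \<sigma> l0 @ \<alpha>))"
    by (subst b_in_proj_iff[OF \<open>0 < n\<close>]) (rule first)
  moreover have "proj n (wsubst \<sigma> l0 @ \<alpha>) @ b # proj n (\<beta> @ wsubst \<sigma> l1)
      = b # replicate k a @ replicate m b"
    using km l \<sigma>c by simp
  ultimately show ?thesis
    using that[OF l \<sigma>c first] by (auto simp: append_eq_Cons_conv)
qed

lemma proj_shape_transfer:
  assumes s: "satisfies M l r" and good: "good n (wsubst \<sigma> l)"
    and card: "card (set l) < n" and "0 < n"
  shows "proj_shape n (wsubst \<sigma> r)"
proof -
  from good have sorted: "sorted_positives (wsubst \<sigma> l)"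
    and zero: "zero_precedes n (wsubst \<sigma> l)" and shape: "proj_shape n (wsubst \<sigma> l)"
    unfolding good_def by simp_all
  obtain k m where "2 \<le> k" "1 \<le> m"
    and km: "proj n (wsubst \<sigma> l) = b # replicate k a @ replicate m b"
    using shape unfolding proj_shape_def by blast
  from \<open>0 < n\<close> km obtain l0 c l1 \<alpha> \<beta> where l: "l = l0 @ c # l1" and \<sigma>c: "\<sigma> c = \<alpha> @ 0 # \<beta>"
    and first: "0 \<notin> set (wsubst \<sigma> l0 @ \<alpha>)" and proj_pre: "proj n (wsubst \<sigma> l0 @ \<alpha>) = []"
    and rest: "proj n (\<beta> @ wsubst \<sigma> l1) = replicate k a @ replicate m b"
    by (rule proj_split_at_first_zero)
  show ?thesis
  proof (cases "c \<in> set l1")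
    case False
    have "c \<notin> set l0"
      using first \<sigma>c by (auto simp: set_wsubst)
    with False show ?thesis
      using l \<sigma>c proj_pre
      by (intro proj_shape_transfer_at_unique_letter[OF s shape,
            where u = l0 and z = c and v = l1 and x = "\<alpha> @ [0]" and y = \<beta>]) simp_all
  next
    case True
    \<comment> \<open>the second copy of c shows that the image of c projects to b alone\<close>
    then obtain u v where l1: "l1 = u @ c # v"
      by (meson split_list)
    have "replicate k a @ replicate m b
        = proj n \<beta> @ proj n (wsubst \<sigma> u) @ b # proj n \<beta> @ proj n (wsubst \<sigma> v)"
      using rest proj_pre l1 \<sigma>c by simp
    then have "proj n \<beta> = []"
      using letters_distinct(1) \<open>2 \<le> k\<close> by (intro replicate_append_eq_repeat_Nil) simp_all
    have "{1..<n} \<subseteq> set (\<beta> @ wsubst \<sigma> l1)"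
      using zero first l \<sigma>c by (intro zero_precedes_after_first_zero[of _ _ "wsubst \<sigma> l0 @ \<alpha>"]) simp_all
    moreover have "set \<beta> \<subseteq> set (wsubst \<sigma> l1)"
      using True \<sigma>c by (auto simp: set_wsubst)
    ultimately have "{1..<n} \<subseteq> set (wsubst \<sigma> l1)"
      by auto
    then show ?thesis
      using \<open>proj n \<beta> = []\<close> proj_pre rest l \<sigma>c \<open>2 \<le> k\<close> \<open>1 \<le> m\<close> card \<open>0 < n\<close>
      by (intro proj_shape_transfer_after_prefix[OF s sorted, where p = "l0 @ [c]" and w = l1])
        simp_all
  qed
qed

lemma good_transfer:
  assumes s: "satisfies M l r" and good: "good n (wsubst \<sigma> l)"
    and card: "card (set l) < n" and "0 < n"
  shows "good n (wsubst \<sigma> r)"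
proof -
  have "sorted_positives (wsubst \<sigma> r)"
    unfolding sorted_positives_def
  proof (intro allI impI notI)
    fix i j :: nat
    assume "0 < i" "i < j" and "before j i (wsubst \<sigma> r)"
    from this(3) have "before j i (wsubst \<sigma> l)"
      by (rule occurs_before_transfer[OF satisfies_sym[OF s]])
    with good \<open>0 < i\<close> \<open>i < j\<close> show False
      unfolding good_def sorted_positives_def by simp
  qed
  moreover have "zero_precedes n (wsubst \<sigma> r)"
    using good occurs_before_transfer[OF s] unfolding good_def zero_precedes_def by simp
  moreover have "proj_shape n (wsubst \<sigma> r)"
    using s good card \<open>0 < n\<close> by (rule proj_shape_transfer)
  ultimately show ?thesis
    unfolding good_def by simp
qed

lemma good_transfer_in_context:
  assumes s: "satisfies M l r" and good: "good n (p @ wsubst \<sigma> l @ q)"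
    and card: "card (set l) + 2 < n"
  shows "good n (p @ wsubst \<sigma> r @ q)"
proof -
  have "finite (set l \<union> set r)"
    by simp
  then obtain x y \<sigma>'
    where ctx: "\<And>w. set w \<subseteq> set l \<union> set r \<Longrightarrow> wsubst \<sigma>' ([x] @ w @ [y]) = p @ wsubst \<sigma> w @ q"
    by (rule context_as_substitution[where p = p and \<sigma> = \<sigma> and q = q]) blast
  have "satisfies M ([x] @ l @ [y]) ([x] @ r @ [y])"
    using satisfies_ctxt_subst[OF s, of "[x]" "\<lambda>c. [c]" "[y]"] by simp
  moreover have "good n (wsubst \<sigma>' ([x] @ l @ [y]))"
    using good ctx[of l] by simp
  moreover have "card (set ([x] @ l @ [y])) < n"
    using card card_insert_le[of "set l" y] card_insert_le[of "insert y (set l)" x]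
    by (simp add: card_insert_if)
  moreover have "0 < n"
    using card by simp
  ultimately have "good n (wsubst \<sigma>' ([x] @ r @ [y]))"
    by (rule good_transfer)
  then show ?thesis
    using ctx[of r] by simp
qed

lemma derivable_preserves_good:
  assumes sound: "\<And>l r. (l, r) \<in> \<Sigma> \<Longrightarrow> satisfies M l r"
    and small: "\<And>l r. (l, r) \<in> \<Sigma> \<Longrightarrow> card (set l) + 2 < n \<and> card (set r) + 2 < n"
    and "derivable \<Sigma> u v"
  shows "good n u \<longleftrightarrow> good n v"
  using \<open>derivable \<Sigma> u v\<close>
proof (rule derivable_invariant)
  fix l r p \<sigma> q
  assume "(l, r) \<in> \<Sigma> \<or> (r, l) \<in> \<Sigma>" and good: "good n (p @ wsubst \<sigma> l @ q)"
  then have s: "satisfies M l r" and card: "card (set l) + 2 < n"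
    using sound small satisfies_sym by blast+
  from s good card show "good n (p @ wsubst \<sigma> r @ q)"
    by (rule good_transfer_in_context)
qed

lemma good_lhs:
  assumes "0 < n"
  shows "good n (sq_prefix n @ [n, n, 0])"
proof -
  let ?D = "concat (map (\<lambda>i. [i, i]) [1..<n])"
  have w: "sq_prefix n @ [n, n, 0] = 0 # ?D @ [n, n, 0]"
    by (simp add: sq_prefix_def)
  have "filter (\<lambda>x. 0 < x) (sq_prefix n @ [n, n, 0]) = concat (map (\<lambda>i. [i, i]) [1..<Suc n])"
    using assms unfolding w by (auto simp: filter_id_conv)
  then have "sorted (filter (\<lambda>x. 0 < x) (sq_prefix n @ [n, n, 0]))"
    by (simp only: sorted_concat_map_double sorted_upt)
  then have "sorted_positives (sq_prefix n @ [n, n, 0])"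
    by (rule sorted_positives_if_sorted_filter)
  moreover have "zero_precedes n (sq_prefix n @ [n, n, 0])"
    unfolding zero_precedes_def w by (auto simp: occurs_before_Cons)
  moreover have "proj n (sq_prefix n @ [n, n, 0]) = b # replicate 2 a @ replicate 1 b"
    using assms proj_squares[of n] unfolding w by (simp add: proj_letter_def numeral_2_eq_2)
  then have "proj_shape n (sq_prefix n @ [n, n, 0])"
    unfolding proj_shape_def by blast
  ultimately show ?thesis
    unfolding good_def by simp
qed

lemma not_good_rhs:
  assumes "0 < n"
  shows "\<not> good n (sq_prefix n @ [n, 0, n])"
proof
  assume "good n (sq_prefix n @ [n, 0, n])"
  then obtain k m where "2 \<le> k" and km: "proj n (sq_prefix n @ [n, 0, n]) = b # replicate k a @ replicate m b"
    unfolding good_def proj_shape_def by blast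
  moreover have "proj n (sq_prefix n @ [n, 0, n]) = [b, a, b, a]"
    using assms proj_squares[of n] by (simp add: sq_prefix_def proj_letter_def)
  moreover obtain k' where "k = Suc (Suc k')"
    using \<open>2 \<le> k\<close> by (intro that[of "k - 2"]) arith
  ultimately show False
    using letters_distinct by simp
qed

end

theorem mainTheorem11:
  fixes M :: "'m::monoid_mult itself" and a b t :: nat
  assumes ident: "\<And>n. n \<ge> 1 \<Longrightarrow>
      satisfies M (sq_prefix n @ [n, n, 0]) (sq_prefix n @ [n, 0, n])"
    and distinct: "distinct [a, b, t]"
    and lterm: "is_lambda_term M (bta_class b t a)"
  shows "\<not> finitely_based M"
proof
  assume "finitely_based M"
  then obtain \<Sigma> where "finite \<Sigma>" and basis: "\<And>u v. satisfies M u v \<longleftrightarrow> derivable \<Sigma> u v"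
    unfolding finitely_based_def by blast
  interpret bta_lambda_term M a b t
    using distinct lterm by unfold_locales
  obtain N where bound: "\<And>l r. (l, r) \<in> \<Sigma> \<Longrightarrow> card (set l) \<le> N \<and> card (set r) \<le> N"
    using \<open>finite \<Sigma>\<close> by (rule finite_identities_card_bound) blast
  define n where "n = N + 3"
  have sound: "satisfies M l r" if "(l, r) \<in> \<Sigma>" for l r
    using derivable.ax[OF that] basis by simp
  have small: "card (set l) + 2 < n \<and> card (set r) + 2 < n" if "(l, r) \<in> \<Sigma>" for l r
    using bound[OF that] unfolding n_def by linarith
  have "satisfies M (sq_prefix n @ [n, n, 0]) (sq_prefix n @ [n, 0, n])"
    by (rule ident) (simp add: n_def)
  then have "derivable \<Sigma> (sq_prefix n @ [n, n, 0]) (sq_prefix n @ [n, 0, n])"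
    by (simp only: basis)
  with sound small have "good n (sq_prefix n @ [n, n, 0]) \<longleftrightarrow> good n (sq_prefix n @ [n, 0, n])"
    by (rule derivable_preserves_good)
  then show False
    using good_lhs[of n] not_good_rhs[of n] by (simp add: n_def)
qed

end
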